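(* Let $C_T$ be the following class of four continuous maps of finite topological spaces: the constant map $\{a\leftrightarrow b\}\to\{*\}$; the constant map $\{a\searrow b\}\to\{*\}$; the inclusion $\{b\}\to\{a\searrow b\}$ of the closed point; and the constant map $\{a\swarrow o\searrow b\}\to\{*\}$. Then a Hausdorff topological space $K$ is compact iff the map $K\to\{*\}$ lies in $C_T^{lr}$.
   Context: For morphisms $f:A\to B$ and $g:X\to Y$ in a category, write $f\rightthreetimes g$ ("$f$ has the left lifting property with respect to $g$") if for all morphisms $i:A\to X$, $j:B\to Y$ with $g\circ i=j\circ f$ there exists a morphism $h:B\to X$ with $h\circ f=i$ and $g\circ h=j$. For a class $C$ of morphisms, $C^l=\{f:\ f\rightthreetimes g\text{ for all }g\in C\}$, $C^r=\{g:\ f\rightthreetimes g\text{ for all }f\in C\}$, $C^{lr}=(C^l)^r$. Finite spaces: $\{*\}$ one point; $\{a\leftrightarrow b\}$ the antidiscrete two-point space; $\{a\searrow b\}$ the Sierpiński space with open sets $\emptyset,\{a\},\{a,b\}$; $\{a\swarrow o\searrow b\}$ the three-point space with points $a,o,b$ and open sets $\emptyset,\{o\},\{o,a\},\{o,b\},\{a,o,b\}$ (so $o$ is open and $a,b$ are closed points in the closure of $o$). *)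

theory Defs
  imports "HOL-Analysis.Analysis"
begin

text \<open>Morphisms of Top are continuous maps; two maps are equal as morphisms
  if they agree on the topspace of their domain.\<close>

definition llp ::
  "'a topology \<Rightarrow> 'b topology \<Rightarrow> ('a \<Rightarrow> 'b) \<Rightarrow> 'c topology \<Rightarrow> 'd topology \<Rightarrow> ('c \<Rightarrow> 'd) \<Rightarrow> bool"
  where
  "llp A B f X Y g \<longleftrightarrow>
    (\<forall>i j. continuous_map A X i \<and> continuous_map B Y j \<and>
           (\<forall>a\<in>topspace A. g (i a) = j (f a)) \<longrightarrow>
        (\<exists>h. continuous_map B X h \<and> (\<forall>a\<in>topspace A. h (f a) = i a) \<and>
             (\<forall>b\<in>topspace B. g (h b) = j b)))"

datatype fpt = Pa | Pb | Po

definition pt :: "unit topology" where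
  "pt = discrete_topology {()}"

definition antidiscr :: "fpt topology" where
  "antidiscr = topology (\<lambda>U. U = {} \<or> U = {Pa, Pb})"

definition sierp :: "fpt topology" where
  "sierp = topology (\<lambda>U. U = {} \<or> U = {Pa} \<or> U = {Pa, Pb})"

definition closedpt :: "fpt topology" where
  "closedpt = topology (\<lambda>U. U \<subseteq> {Pb})"

definition threept :: "fpt topology" where
  "threept = topology (\<lambda>U. U = {} \<or> U = {Po} \<or> U = {Po, Pa} \<or> U = {Po, Pb} \<or> U = {Pa, Po, Pb})"

definition in_CT_l :: "'a topology \<Rightarrow> 'b topology \<Rightarrow> ('a \<Rightarrow> 'b) \<Rightarrow> bool" where
  "in_CT_l A B f \<longleftrightarrow> continuous_map A B f \<and>
     llp A B f antidiscr pt (\<lambda>_. ()) \<and>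
     llp A B f sierp pt (\<lambda>_. ()) \<and>
     llp A B f closedpt sierp (\<lambda>x. x) \<and>
     llp A B f threept pt (\<lambda>_. ())"

text \<open>Membership of g : X -> Y in C_T^lr, where the class C_T^l is taken over
  all continuous maps between spaces carried by the types 'a and 'b.\<close>
definition in_CT_lr :: "'a itself \<Rightarrow> 'b itself \<Rightarrow> 'c topology \<Rightarrow> 'd topology \<Rightarrow> ('c \<Rightarrow> 'd) \<Rightarrow> bool" where
  "in_CT_lr (_::'a itself) (_::'b itself) X Y g \<longleftrightarrow> continuous_map X Y g \<and>
     (\<forall>(A::'a topology) (B::'b topology) f. in_CT_l A B f \<longrightarrow> llp A B f X Y g)"




lemma fpt_UNIV: "UNIV = {Pa,Pb,Po}" using fpt.exhaust by auto
lemma fpt_sub: "U = {x\<in>{Pa,Pb,Po}. x \<in> U}" using fpt.exhaust by auto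
lemma e1: "(U = {} \<or> U = {Pa, Pb}) \<longleftrightarrow> (Po \<notin> U \<and> (Pa \<in> U \<longleftrightarrow> Pb \<in> U))"
  apply (subst (1 2) fpt_sub) by (auto, (metis fpt.exhaust)+)
lemma e2: "(U = {} \<or> U = {Pa} \<or> U = {Pa, Pb}) \<longleftrightarrow> (Po \<notin> U \<and> (Pb \<in> U \<longrightarrow> Pa \<in> U))"
  apply (subst (1 2 3) fpt_sub) by (auto, (metis fpt.exhaust)+)
lemma e3: "(U = {} \<or> U = {Po} \<or> U = {Po, Pa} \<or> U = {Po, Pb} \<or> U = {Pa, Po, Pb}) \<longleftrightarrow> ((Pa \<in> U \<longrightarrow> Po \<in> U) \<and> (Pb \<in> U \<longrightarrow> Po \<in> U))"
  apply (subst (1 2 3 4 5) fpt_sub) by (auto, (metis fpt.exhaust)+)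
lemma istopology_antidiscr: "istopology (\<lambda>U. U = {} \<or> U = {Pa, Pb})"
  unfolding e1 istopology_def by blast
lemma istopology_sierp: "istopology (\<lambda>U. U = {} \<or> U = {Pa} \<or> U = {Pa, Pb})"
  unfolding e2 istopology_def by blast
lemma istopology_closedpt: "istopology (\<lambda>U. U \<subseteq> {Pb})"
  unfolding istopology_def by auto
lemma istopology_threept: "istopology (\<lambda>U. U = {} \<or> U = {Po} \<or> U = {Po, Pa} \<or> U = {Po, Pb} \<or> U = {Pa, Po, Pb})"
  unfolding e3 istopology_def by blast

lemma openin_antidiscr: "openin antidiscr U \<longleftrightarrow> U = {} \<or> U = {Pa, Pb}"
  unfolding antidiscr_def using istopology_antidiscr by simp
lemma openin_sierp: "openin sierp U \<longleftrightarrow> U = {} \<or> U = {Pa} \<or> U = {Pa, Pb}"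
  unfolding sierp_def using istopology_sierp by simp
lemma openin_closedpt: "openin closedpt U \<longleftrightarrow> U \<subseteq> {Pb}"
  unfolding closedpt_def using istopology_closedpt by simp
lemma openin_threept: "openin threept U \<longleftrightarrow> U = {} \<or> U = {Po} \<or> U = {Po, Pa} \<or> U = {Po, Pb} \<or> U = {Pa, Po, Pb}"
  unfolding threept_def using istopology_threept by simp

end

theory Submission
  imports Defs
begin

text \<open>If \<open>K\<close> is compact Hausdorff, every \<open>f : A \<rightarrow> B\<close> in \<open>C\<^sub>T\<^sup>l\<close> has dense image (lifting
  against \<open>{b} \<rightarrow> {a \<searrow> b}\<close>) and separates disjoint closed subsets of \<open>A\<close> by neighbourhoods in \<open>B\<close>
  (lifting against \<open>{a \<swarrow> o \<searrow> b} \<rightarrow> {*}\<close>). A map \<open>i : A \<rightarrow> K\<close> then extends along \<open>f\<close> by sending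
  \<open>b\<close> to the unique point of its cluster set, the intersection of the closures of \<open>i(f\<^sup>-\<^sup>1 V)\<close> over the
  neighbourhoods \<open>V\<close> of \<open>b\<close>: compactness gives a point, regularity and separation give
  uniqueness and continuity.

  If \<open>K\<close> is not compact, take an ultrafilter converging to no point of \<open>K\<close> and adjoin a point
  whose neighbourhoods are the open sets with trace in the ultrafilter. The inclusion of \<open>K\<close> lies
  in \<open>C\<^sub>T\<^sup>l\<close> (primality of the ultrafilter fixes the value at the new point when lifting against
  \<open>{a \<swarrow> o \<searrow> b} \<rightarrow> {*}\<close>), yet \<open>K\<close> is not a retract of the enlarged space: a retraction would send
  the new point to a limit of the ultrafilter.\<close>

lemma topspace_pt: "topspace pt = {()}"
  by (simp add: pt_def)

lemma topspace_antidiscr: "topspace antidiscr = {Pa, Pb}"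
  unfolding topspace_def openin_antidiscr by auto

lemma topspace_sierp: "topspace sierp = {Pa, Pb}"
  unfolding topspace_def openin_sierp by auto

lemma topspace_closedpt: "topspace closedpt = {Pb}"
  unfolding topspace_def openin_closedpt by auto

lemma topspace_threept: "topspace threept = {Pa, Po, Pb}"
  unfolding topspace_def openin_threept by auto

lemma continuous_map_pt [simp]: "continuous_map X pt g"
proof -
  have "g = (\<lambda>_. ())"
    by auto
  then show ?thesis
    by (simp add: topspace_pt)
qed

lemma continuous_map_antidiscr: "continuous_map X antidiscr g \<longleftrightarrow> g \<in> topspace X \<rightarrow> {Pa, Pb}"
proof -
  have "{x \<in> topspace X. g x \<in> {Pa, Pb}} = topspace X" if "g \<in> topspace X \<rightarrow> {Pa, Pb}"
    using that by auto
  then show ?thesis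
    by (auto simp: continuous_map_def topspace_antidiscr openin_antidiscr)
qed

lemma continuous_map_closedpt: "continuous_map X closedpt g \<longleftrightarrow> (\<forall>x\<in>topspace X. g x = Pb)"
proof -
  have "{x \<in> topspace X. g x \<in> U} = (if Pb \<in> U then topspace X else {})"
    if "\<forall>x\<in>topspace X. g x = Pb" "U \<subseteq> {Pb}" for U
    using that by auto
  then show ?thesis
    by (auto simp: continuous_map_def topspace_closedpt openin_closedpt)
qed

lemma continuous_map_sierp:
  "continuous_map X sierp g \<longleftrightarrow> g \<in> topspace X \<rightarrow> {Pa, Pb} \<and> openin X {x \<in> topspace X. g x = Pa}"
proof -
  have "{x \<in> topspace X. g x \<in> {Pa, Pb}} = topspace X" if "g \<in> topspace X \<rightarrow> {Pa, Pb}"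
    using that by auto
  then show ?thesis
    by (auto simp: continuous_map_def topspace_sierp openin_sierp Pi_iff)
qed

lemma continuous_map_threept:
  "continuous_map X threept g \<longleftrightarrow> g \<in> topspace X \<rightarrow> {Pa, Po, Pb} \<and>
     openin X {x \<in> topspace X. g x \<noteq> Pb} \<and> openin X {x \<in> topspace X. g x \<noteq> Pa}"
proof -
  have "{x \<in> topspace X. g x \<in> {Po}} = {x \<in> topspace X. g x \<noteq> Pb} \<inter> {x \<in> topspace X. g x \<noteq> Pa}"
    and "{x \<in> topspace X. g x \<in> {Po, Pa}} = {x \<in> topspace X. g x \<noteq> Pb}"
    and "{x \<in> topspace X. g x \<in> {Po, Pb}} = {x \<in> topspace X. g x \<noteq> Pa}"
    and "{x \<in> topspace X. g x \<in> {Pa, Po, Pb}} = topspace X"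
    if "g \<in> topspace X \<rightarrow> {Pa, Po, Pb}"
    using that by auto
  then show ?thesis
    unfolding continuous_map_def topspace_threept openin_threept
    by (auto simp: insert_commute)
qed

lemma llp_pt_iff:
  "llp A B f X pt g \<longleftrightarrow>
     (\<forall>i. continuous_map A X i \<longrightarrow> (\<exists>h. continuous_map B X h \<and> (\<forall>a\<in>topspace A. h (f a) = i a)))"
  unfolding llp_def by auto

lemma llpE:
  assumes "llp A B f X Y g" "continuous_map A X i" "continuous_map B Y j"
    "\<And>a. a \<in> topspace A \<Longrightarrow> g (i a) = j (f a)"
  obtains h where "continuous_map B X h" "\<And>a. a \<in> topspace A \<Longrightarrow> h (f a) = i a"
    "\<And>b. b \<in> topspace B \<Longrightarrow> g (h b) = j b"
  using assms unfolding llp_def by metis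

lemma llp_closedpt_sierp_imp_dense:
  assumes "llp A B f closedpt sierp (\<lambda>x. x)" and "openin B V" and "b \<in> V"
  shows "topspace A \<inter> f -` V \<noteq> {}"
proof
  assume empty: "topspace A \<inter> f -` V = {}"
  define j where "j x = (if x \<in> V then Pa else Pb)" for x
  have "{x \<in> topspace B. j x = Pa} = V"
    using openin_subset[OF \<open>openin B V\<close>] by (auto simp: j_def)
  then have "continuous_map B sierp j"
    using \<open>openin B V\<close> by (auto simp: continuous_map_sierp j_def)
  moreover have "continuous_map A closedpt (\<lambda>_. Pb)"
    unfolding continuous_map_closedpt by simp
  moreover have "\<And>a. a \<in> topspace A \<Longrightarrow> Pb = j (f a)"
    using empty by (auto simp: j_def)
  ultimately obtain h where "continuous_map B closedpt h" "\<And>x. x \<in> topspace B \<Longrightarrow> h x = j x"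
    using llpE[OF assms(1)] by metis
  moreover have "b \<in> topspace B"
    using assms(2,3) openin_subset by blast
  ultimately show False
    using \<open>b \<in> V\<close> by (auto simp: continuous_map_closedpt j_def)
qed

lemma llp_threept_imp_separating:
  assumes "llp A B f threept pt g" and "closedin A F1" "closedin A F2" "disjnt F1 F2"
    and "b \<in> topspace B"
  shows "\<exists>V. openin B V \<and> b \<in> V \<and> (disjnt F1 (f -` V) \<or> disjnt F2 (f -` V))"
proof -
  define i where "i a = (if a \<in> F1 then Pa else if a \<in> F2 then Pb else Po)" for a
  have "{a \<in> topspace A. i a \<noteq> Pb} = topspace A - F2" "{a \<in> topspace A. i a \<noteq> Pa} = topspace A - F1"
    using \<open>disjnt F1 F2\<close> by (auto simp: i_def disjnt_iff)
  then have "continuous_map A threept i"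
    using assms(2,3) by (simp add: continuous_map_threept i_def closedin_def)
  then obtain h where h: "continuous_map B threept h" "\<forall>a\<in>topspace A. h (f a) = i a"
    using assms(1) unfolding llp_pt_iff by blast
  define V where "V c = {x \<in> topspace B. h x \<noteq> c}" for c
  have "openin B (V c)" if "c \<in> {Pa, Pb}" for c
    using h(1) that by (auto simp: continuous_map_threept V_def)
  moreover have "disjnt F1 (f -` V Pa)" "disjnt F2 (f -` V Pb)"
    using h(2) closedin_subset[OF assms(2)] closedin_subset[OF assms(3)] \<open>disjnt F1 F2\<close>
    by (force simp: V_def i_def disjnt_iff)+
  moreover have "b \<in> V Pa \<or> b \<in> V Pb"
    using \<open>b \<in> topspace B\<close> by (auto simp: V_def)
  ultimately show ?thesis
    by blast
qed

lemma regular_space_closure_of_subset: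
  assumes "regular_space X" "openin X W" "x \<in> W"
  obtains U where "openin X U" "x \<in> U" "X closure_of U \<subseteq> W"
proof -
  have "closedin X (topspace X - W)" "x \<in> topspace X - (topspace X - W)"
    using assms(2,3) openin_subset by fastforce+
  then obtain U where "openin X U" "x \<in> U" "disjnt (topspace X - W) (X closure_of U)"
    using assms(1) unfolding regular_space by blast
  moreover have "X closure_of U \<subseteq> W"
    using \<open>disjnt _ _\<close> closure_of_subset_topspace[of X U] by (auto simp: disjnt_iff)
  ultimately show thesis
    using that by blast
qed

locale compact_extension =
  fixes A :: "'a topology" and B :: "'b topology" and f :: "'a \<Rightarrow> 'b"
    and K :: "'k topology" and i :: "'a \<Rightarrow> 'k"
  assumes f_continuous: "continuous_map A B f"
    and f_dense: "\<And>V b. openin B V \<Longrightarrow> b \<in> V \<Longrightarrow> topspace A \<inter> f -` V \<noteq> {}"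
    and f_separating: "\<And>F1 F2 b. closedin A F1 \<Longrightarrow> closedin A F2 \<Longrightarrow> disjnt F1 F2 \<Longrightarrow>
       b \<in> topspace B \<Longrightarrow> \<exists>V. openin B V \<and> b \<in> V \<and> (disjnt F1 (f -` V) \<or> disjnt F2 (f -` V))"
    and compact: "compact_space K" and Hausdorff: "Hausdorff_space K"
    and i_continuous: "continuous_map A K i"
begin

lemma f_in_topspace: "a \<in> topspace A \<Longrightarrow> f a \<in> topspace B"
  using continuous_map_funspace[OF f_continuous] by blast

definition image_over :: "'b set \<Rightarrow> 'k set" where
  "image_over V = i ` (topspace A \<inter> f -` V)"

definition cluster_set :: "'b \<Rightarrow> 'k set" where
  "cluster_set b = (\<Inter>V \<in> {V. openin B V \<and> b \<in> V}. K closure_of image_over V)"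

lemma in_closure_of_image_over:
  assumes "a \<in> topspace A" "f a \<in> V"
  shows "i a \<in> K closure_of image_over V"
proof -
  have "image_over V \<subseteq> topspace K"
    using continuous_map_image_subset_topspace[OF i_continuous] by (auto simp: image_over_def)
  moreover have "i a \<in> image_over V"
    using assms by (simp add: image_over_def)
  ultimately show ?thesis
    using closure_of_subset by blast
qed

lemma cluster_set_subset: "openin B V \<Longrightarrow> b \<in> V \<Longrightarrow> cluster_set b \<subseteq> K closure_of image_over V"
  unfolding cluster_set_def by blast

lemma cluster_set_subset_topspace: "b \<in> topspace B \<Longrightarrow> cluster_set b \<subseteq> topspace K"
  by (rule order_trans[OF cluster_set_subset[OF openin_topspace] closure_of_subset_topspace])

lemma in_cluster_set_image: "a \<in> topspace A \<Longrightarrow> i a \<in> cluster_set (f a)"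
  unfolding cluster_set_def using in_closure_of_image_over by blast

lemma cluster_set_nonempty:
  assumes "b \<in> topspace B"
  shows "cluster_set b \<noteq> {}"
proof -
  define \<C> where "\<C> = (\<lambda>V. K closure_of image_over V) ` {V. openin B V \<and> b \<in> V}"
  have "\<forall>\<F>. finite \<F> \<and> \<F> \<subseteq> \<C> \<longrightarrow> \<Inter>\<F> \<noteq> {}"
  proof (intro allI impI, elim conjE)
    fix \<F> assume "finite \<F>" "\<F> \<subseteq> \<C>"
    obtain \<V> where \<V>: "\<V> \<subseteq> {V. openin B V \<and> b \<in> V}" "finite \<V>"
      "\<F> = (\<lambda>V. K closure_of image_over V) ` \<V>"
      using finite_subset_image[OF \<open>finite \<F>\<close> \<open>\<F> \<subseteq> \<C>\<close>[unfolded \<C>_def]] by (elim exE conjE)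
    have "openin B (topspace B \<inter> \<Inter>\<V>)"
      using \<V>(1,2) by (intro openin_Int_Inter) auto
    moreover have "b \<in> topspace B \<inter> \<Inter>\<V>"
      using \<V>(1) assms by blast
    ultimately have "topspace A \<inter> f -` (topspace B \<inter> \<Inter>\<V>) \<noteq> {}"
      by (rule f_dense)
    then obtain a where a: "a \<in> topspace A" "f a \<in> \<Inter>\<V>"
      by blast
    have "i a \<in> \<Inter>\<F>"
      unfolding \<V>(3) using a by (intro INT_I in_closure_of_image_over) auto
    then show "\<Inter>\<F> \<noteq> {}"
      by blast
  qed
  moreover have "\<forall>C\<in>\<C>. closedin K C"
    unfolding \<C>_def by auto
  ultimately have "\<Inter>\<C> \<noteq> {}"
    using compact compact_space_fip by metis
  then show ?thesis
    unfolding cluster_set_def \<C>_def by simp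
qed

text \<open>By regularity choose \<open>k \<in> W''\<close> with \<open>cl W'' \<subseteq> W'\<close> and \<open>cl W' \<subseteq> W\<close>, and separate the
  preimages of \<open>K - W'\<close> and \<open>cl W''\<close>: the second alternative would keep \<open>k\<close> out of the
  cluster set.\<close>
lemma cluster_set_shrinks:
  assumes "b \<in> topspace B" "k \<in> cluster_set b" "openin K W" "k \<in> W"
  obtains V where "openin B V" "b \<in> V" "K closure_of image_over V \<subseteq> W"
proof -
  have regular: "regular_space K"
    using compact Hausdorff by (rule compact_Hausdorff_imp_regular_space)
  obtain W' where W': "openin K W'" "k \<in> W'" "K closure_of W' \<subseteq> W"
    using regular_space_closure_of_subset[OF regular assms(3,4)] .
  obtain W'' where W'': "openin K W''" "k \<in> W''" "K closure_of W'' \<subseteq> W'"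
    using regular_space_closure_of_subset[OF regular W'(1,2)] .
  let ?F1 = "{a \<in> topspace A. i a \<in> topspace K - W'}"
  let ?F2 = "{a \<in> topspace A. i a \<in> K closure_of W''}"
  have "closedin A ?F1"
    using W'(1) by (intro closedin_continuous_map_preimage[OF i_continuous]) auto
  moreover have "closedin A ?F2"
    by (intro closedin_continuous_map_preimage[OF i_continuous]) simp
  moreover have "disjnt ?F1 ?F2"
    using W''(3) by (auto simp: disjnt_iff)
  ultimately have "\<exists>V. openin B V \<and> b \<in> V \<and> (disjnt ?F1 (f -` V) \<or> disjnt ?F2 (f -` V))"
    using assms(1) by (intro f_separating)
  then obtain V where V: "openin B V" "b \<in> V" "disjnt ?F1 (f -` V) \<or> disjnt ?F2 (f -` V)"
    by blast
  have "K closure_of image_over V \<subseteq> W"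
    using V(3)
  proof
    assume "disjnt ?F1 (f -` V)"
    then have "image_over V \<subseteq> W'"
      using continuous_map_image_subset_topspace[OF i_continuous]
      by (auto simp: disjnt_iff image_over_def)
    then show ?thesis
      using W'(3) closure_of_mono by blast
  next
    assume "disjnt ?F2 (f -` V)"
    then have "W'' \<inter> image_over V = {}"
      using closure_of_subset[OF openin_subset[OF W''(1)]] by (auto simp: disjnt_iff image_over_def)
    then have "k \<notin> K closure_of image_over V"
      using W''(1,2) by (auto simp: in_closure_of)
    then show ?thesis
      using cluster_set_subset[OF V(1,2)] assms(2) by blast
  qed
  then show thesis
    using that V(1,2) by blast
qed

lemma cluster_set_singleton:
  assumes "b \<in> topspace B"
  obtains k where "cluster_set b = {k}"
proof -
  have "k1 = k2" if k1: "k1 \<in> cluster_set b" and k2: "k2 \<in> cluster_set b" for k1 k2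
  proof (rule ccontr)
    assume "k1 \<noteq> k2"
    moreover have "k1 \<in> topspace K" "k2 \<in> topspace K"
      using k1 k2 cluster_set_subset_topspace[OF assms] by auto
    ultimately obtain U1 U2 where U: "openin K U1" "openin K U2" "k1 \<in> U1" "k2 \<in> U2" "disjnt U1 U2"
      using Hausdorff unfolding Hausdorff_space_def by blast
    obtain V where "openin B V" "b \<in> V" "K closure_of image_over V \<subseteq> U1"
      using cluster_set_shrinks[OF assms k1 U(1,3)] .
    then have "k2 \<in> U1"
      using cluster_set_subset k2 by blast
    then show False
      using U(4,5) by (auto simp: disjnt_iff)
  qed
  moreover obtain k where "k \<in> cluster_set b"
    using cluster_set_nonempty[OF assms] by blast
  ultimately have "cluster_set b = {k}"
    by blast
  then show thesis
    by (rule that)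
qed

definition extension :: "'b \<Rightarrow> 'k" where
  "extension b = the_elem (cluster_set b)"

lemma cluster_set_eq_extension: "b \<in> topspace B \<Longrightarrow> cluster_set b = {extension b}"
  using cluster_set_singleton by (metis extension_def the_elem_eq)

lemma extension_in_cluster_set: "b \<in> topspace B \<Longrightarrow> extension b \<in> cluster_set b"
  using cluster_set_eq_extension by simp

lemma extension_extends: "a \<in> topspace A \<Longrightarrow> extension (f a) = i a"
  using in_cluster_set_image cluster_set_eq_extension[OF f_in_topspace] by simp

lemma continuous_map_extension: "continuous_map B K extension"
  unfolding continuous_map_def
proof (intro conjI allI impI Pi_I)
  show "extension b \<in> topspace K" if "b \<in> topspace B" for b
    using cluster_set_subset_topspace[OF that] extension_in_cluster_set[OF that] by (rule subsetD)
  fix W assume "openin K W"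
  show "openin B {b \<in> topspace B. extension b \<in> W}"
  proof (subst openin_subopen, intro ballI)
    fix b assume "b \<in> {b \<in> topspace B. extension b \<in> W}"
    then have b: "b \<in> topspace B" "extension b \<in> W"
      by simp_all
    obtain V where V: "openin B V" "b \<in> V" "K closure_of image_over V \<subseteq> W"
      using cluster_set_shrinks[OF b(1) extension_in_cluster_set[OF b(1)] \<open>openin K W\<close> b(2)] .
    have "V \<subseteq> {b \<in> topspace B. extension b \<in> W}"
    proof
      fix c assume "c \<in> V"
      then have "c \<in> topspace B"
        using openin_subset[OF V(1)] by blast
      moreover have "extension c \<in> K closure_of image_over V"
        using \<open>c \<in> V\<close> calculation extension_in_cluster_set cluster_set_subset[OF V(1)] by blast
      ultimately show "c \<in> {b \<in> topspace B. extension b \<in> W}"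
        using V(3) by blast
    qed
    then show "\<exists>T. openin B T \<and> b \<in> T \<and> T \<subseteq> {b \<in> topspace B. extension b \<in> W}"
      using V(1,2) by blast
  qed
qed

end

definition fip_on :: "'a set \<Rightarrow> 'a set set \<Rightarrow> bool" where
  "fip_on X \<F> \<longleftrightarrow> (\<forall>\<G>. finite \<G> \<and> \<G> \<subseteq> \<F> \<longrightarrow> X \<inter> \<Inter>\<G> \<noteq> {})"

lemma fip_onD: "fip_on X \<F> \<Longrightarrow> finite \<G> \<Longrightarrow> \<G> \<subseteq> \<F> \<Longrightarrow> X \<inter> \<Inter>\<G> \<noteq> {}"
  unfolding fip_on_def by blast

text \<open>Equivalent to the usual notion of an ultrafilter on \<open>X\<close>; closure under supersets and finite
  intersections is derived below.\<close>
definition ultrafilter_on :: "'a set \<Rightarrow> 'a set set \<Rightarrow> bool" where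
  "ultrafilter_on X \<U> \<longleftrightarrow> \<U> \<subseteq> Pow X \<and> fip_on X \<U> \<and> (\<forall>Y. Y \<subseteq> X \<longrightarrow> Y \<in> \<U> \<or> X - Y \<in> \<U>)"

lemma not_fip_on_insertE:
  assumes "\<not> fip_on X (insert Y \<F>)"
  obtains \<G> where "finite \<G>" "\<G> \<subseteq> \<F>" "X \<inter> Y \<inter> \<Inter>\<G> = {}"
proof -
  obtain \<H> where \<H>: "finite \<H>" "\<H> \<subseteq> insert Y \<F>" "X \<inter> \<Inter>\<H> = {}"
    using assms unfolding fip_on_def by blast
  have "X \<inter> Y \<inter> \<Inter>(\<H> - {Y}) \<subseteq> X \<inter> \<Inter>\<H>"
    by blast
  with \<H> show thesis
    using that[of "\<H> - {Y}"] by blast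
qed

lemma fip_on_insert_cases:
  assumes "fip_on X \<F>"
  shows "fip_on X (insert Y \<F>) \<or> fip_on X (insert (X - Y) \<F>)"
proof (rule ccontr)
  assume "\<not> ?thesis"
  then have "\<not> fip_on X (insert Y \<F>)" "\<not> fip_on X (insert (X - Y) \<F>)"
    by simp_all
  then obtain \<G>1 \<G>2 where "finite \<G>1" "\<G>1 \<subseteq> \<F>" "X \<inter> Y \<inter> \<Inter>\<G>1 = {}"
    and "finite \<G>2" "\<G>2 \<subseteq> \<F>" "X \<inter> (X - Y) \<inter> \<Inter>\<G>2 = {}"
    by (elim not_fip_on_insertE)
  moreover have "X \<inter> \<Inter>(\<G>1 \<union> \<G>2) \<subseteq> (X \<inter> Y \<inter> \<Inter>\<G>1) \<union> (X \<inter> (X - Y) \<inter> \<Inter>\<G>2)"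
    by blast
  ultimately show False
    using fip_onD[OF assms, of "\<G>1 \<union> \<G>2"] by auto
qed

lemma fip_on_Union_chain:
  assumes "\<C> \<noteq> {}" "subset.chain \<A> \<C>" "\<And>\<F>. \<F> \<in> \<C> \<Longrightarrow> fip_on X \<F>"
  shows "fip_on X (\<Union>\<C>)"
  unfolding fip_on_def
proof (intro allI impI, elim conjE)
  fix \<G> assume "finite \<G>" "\<G> \<subseteq> \<Union>\<C>"
  then obtain \<F> where "\<F> \<in> \<C>" "\<G> \<subseteq> \<F>"
    using finite_subset_Union_chain assms(1,2) by metis
  then show "X \<inter> \<Inter>\<G> \<noteq> {}"
    using assms(3) \<open>finite \<G>\<close> fip_onD by metis
qed

lemma fip_on_extends_to_ultrafilter_on:
  assumes "\<S> \<subseteq> Pow X" "fip_on X \<S>"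
  obtains \<U> where "\<S> \<subseteq> \<U>" "ultrafilter_on X \<U>"
proof -
  define \<A> where "\<A> = {\<F>. \<S> \<subseteq> \<F> \<and> \<F> \<subseteq> Pow X \<and> fip_on X \<F>}"
  have "\<exists>\<M>\<in>\<A>. \<forall>\<F>\<in>\<A>. \<M> \<subseteq> \<F> \<longrightarrow> \<F> = \<M>"
  proof (rule subset_Zorn_nonempty)
    show "\<A> \<noteq> {}"
      using assms unfolding \<A>_def by blast
    fix \<C> assume "\<C> \<noteq> {}" and chain: "subset.chain \<A> \<C>"
    then have "\<C> \<subseteq> \<A>"
      by (simp add: subset_chain_def)
    have "\<S> \<subseteq> \<Union>\<C>"
      using \<open>\<C> \<noteq> {}\<close> \<open>\<C> \<subseteq> \<A>\<close> unfolding \<A>_def by blast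
    moreover have "\<Union>\<C> \<subseteq> Pow X"
      using \<open>\<C> \<subseteq> \<A>\<close> unfolding \<A>_def by blast
    moreover have "fip_on X (\<Union>\<C>)"
      using \<open>\<C> \<subseteq> \<A>\<close> unfolding \<A>_def by (intro fip_on_Union_chain[OF \<open>\<C> \<noteq> {}\<close> chain]) blast
    ultimately show "\<Union>\<C> \<in> \<A>"
      unfolding \<A>_def by simp
  qed
  then obtain \<M> where "\<M> \<in> \<A>" and maximal: "\<And>\<F>. \<F> \<in> \<A> \<Longrightarrow> \<M> \<subseteq> \<F> \<Longrightarrow> \<F> = \<M>"
    by blast
  then have \<M>: "\<S> \<subseteq> \<M>" "\<M> \<subseteq> Pow X" "fip_on X \<M>"
    unfolding \<A>_def by auto
  have "Y \<in> \<M> \<or> X - Y \<in> \<M>" if "Y \<subseteq> X" for Y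
  proof -
    have "insert Y \<M> \<in> \<A> \<or> insert (X - Y) \<M> \<in> \<A>"
      using fip_on_insert_cases[OF \<M>(3), of Y] \<M> \<open>Y \<subseteq> X\<close> unfolding \<A>_def by auto
    then show ?thesis
      using maximal by (metis insertI1 subset_insertI)
  qed
  with \<M> show thesis
    using that unfolding ultrafilter_on_def by blast
qed

context
  fixes X :: "'a set" and \<U> :: "'a set set"
  assumes ultrafilter: "ultrafilter_on X \<U>"
begin

lemma ultrafilter_on_subset: "V \<in> \<U> \<Longrightarrow> V \<subseteq> X"
  using ultrafilter unfolding ultrafilter_on_def by blast

lemma ultrafilter_on_cases: "Y \<subseteq> X \<Longrightarrow> Y \<in> \<U> \<or> X - Y \<in> \<U>"
  using ultrafilter unfolding ultrafilter_on_def by blast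

lemma ultrafilter_on_Int_nonempty: "V \<in> \<U> \<Longrightarrow> W \<in> \<U> \<Longrightarrow> V \<inter> W \<noteq> {}"
  using ultrafilter fip_onD[of X \<U> "{V, W}"] unfolding ultrafilter_on_def by auto

lemma ultrafilter_on_empty: "{} \<notin> \<U>"
  using ultrafilter_on_Int_nonempty by blast

lemma ultrafilter_on_space: "X \<in> \<U>"
  using ultrafilter_on_cases[of "{}"] ultrafilter_on_empty by simp

lemma ultrafilter_on_mono:
  assumes "V \<in> \<U>" "V \<subseteq> W" "W \<subseteq> X"
  shows "W \<in> \<U>"
proof (rule ccontr)
  assume "W \<notin> \<U>"
  then have "X - W \<in> \<U>"
    using ultrafilter_on_cases[OF assms(3)] by simp
  moreover have "V \<inter> (X - W) = {}"
    using assms(2) by auto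
  ultimately show False
    using ultrafilter_on_Int_nonempty[OF assms(1)] by simp
qed

lemma ultrafilter_on_Int:
  assumes "V \<in> \<U>" "W \<in> \<U>"
  shows "V \<inter> W \<in> \<U>"
proof (rule ccontr)
  assume "V \<inter> W \<notin> \<U>"
  moreover have "V \<inter> W \<subseteq> X"
    using ultrafilter_on_subset[OF assms(1)] by auto
  ultimately have "X - V \<inter> W \<in> \<U>"
    using ultrafilter_on_cases by auto
  then have "X \<inter> \<Inter>{V, W, X - V \<inter> W} \<noteq> {}"
    using assms ultrafilter unfolding ultrafilter_on_def by (intro fip_onD) auto
  then show False
    by auto
qed

lemma ultrafilter_on_Un:
  assumes "V \<union> W = X"
  shows "V \<in> \<U> \<or> W \<in> \<U>"
proof (cases "V \<in> \<U>")
  case False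
  then have "X - V \<in> \<U>"
    using ultrafilter_on_cases[of V] assms by auto
  moreover have "X - V \<subseteq> W" "W \<subseteq> X"
    using assms by auto
  ultimately show ?thesis
    using ultrafilter_on_mono by auto
qed simp

end

lemma not_compact_space_imp_ultrafilter_on:
  assumes "\<not> compact_space K"
  obtains \<U> where "ultrafilter_on (topspace K) \<U>"
    "\<And>k. k \<in> topspace K \<Longrightarrow> \<exists>V. openin K V \<and> k \<in> V \<and> V \<notin> \<U>"
proof -
  have "\<exists>\<C>. (\<forall>C\<in>\<C>. closedin K C) \<and> (\<forall>\<F>. finite \<F> \<and> \<F> \<subseteq> \<C> \<longrightarrow> \<Inter>\<F> \<noteq> {}) \<and> \<Inter>\<C> = {}"
    using assms unfolding compact_space_fip by (simp only: not_all not_imp not_not conj_assoc)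
  then obtain \<C> where closed: "\<forall>C\<in>\<C>. closedin K C"
    and fip: "\<forall>\<F>. finite \<F> \<and> \<F> \<subseteq> \<C> \<longrightarrow> \<Inter>\<F> \<noteq> {}" and empty: "\<Inter>\<C> = {}"
    by (elim exE conjE)
  have "\<C> \<noteq> {}"
    using empty by auto
  then obtain C0 where "C0 \<in> \<C>"
    by blast
  have fip_on: "fip_on (topspace K) \<C>"
    unfolding fip_on_def
  proof (intro allI impI, elim conjE)
    fix \<G> assume "finite \<G>" "\<G> \<subseteq> \<C>"
    then have "\<Inter>(insert C0 \<G>) \<noteq> {}"
      using fip \<open>C0 \<in> \<C>\<close> by (metis finite.insertI insert_subsetI)
    moreover have "\<Inter>(insert C0 \<G>) \<subseteq> topspace K \<inter> \<Inter>\<G>"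
      using closed \<open>C0 \<in> \<C>\<close> closedin_subset by auto
    ultimately show "topspace K \<inter> \<Inter>\<G> \<noteq> {}"
      by auto
  qed
  have "\<C> \<subseteq> Pow (topspace K)"
    using closed closedin_subset by auto
  then obtain \<U> where "\<C> \<subseteq> \<U>" and \<U>: "ultrafilter_on (topspace K) \<U>"
    by (rule fip_on_extends_to_ultrafilter_on[OF _ fip_on])
  have "\<exists>V. openin K V \<and> k \<in> V \<and> V \<notin> \<U>" if "k \<in> topspace K" for k
  proof -
    have "k \<notin> \<Inter>\<C>"
      using empty by simp
    then obtain C where "C \<in> \<C>" "k \<notin> C"
      by blast
    then have "openin K (topspace K - C)" "k \<in> topspace K - C"
      using closed \<open>C \<in> \<C>\<close> that by auto
    moreover have "topspace K - C \<notin> \<U>"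
      using ultrafilter_on_Int_nonempty[OF \<U>, of "topspace K - C" C] \<open>C \<in> \<C>\<close> \<open>\<C> \<subseteq> \<U>\<close> by auto
    ultimately show ?thesis
      by blast
  qed
  with \<U> show thesis
    by (rule that)
qed

definition adjoin_limit_point :: "'a topology \<Rightarrow> 'a set set \<Rightarrow> 'a option topology" where
  "adjoin_limit_point K \<U> = topology (\<lambda>S. openin K (Some -` S) \<and> (None \<in> S \<longrightarrow> Some -` S \<in> \<U>))"

context
  fixes K :: "'a topology" and \<U> :: "'a set set"
  assumes ultrafilter: "ultrafilter_on (topspace K) \<U>"
begin

lemma istopology_adjoin_limit_point:
  "istopology (\<lambda>S. openin K (Some -` S) \<and> (None \<in> S \<longrightarrow> Some -` S \<in> \<U>))"
  unfolding istopology_def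
proof (rule conjI; intro allI impI)
  fix S T :: "'a option set"
  assume "openin K (Some -` S) \<and> (None \<in> S \<longrightarrow> Some -` S \<in> \<U>)"
    and "openin K (Some -` T) \<and> (None \<in> T \<longrightarrow> Some -` T \<in> \<U>)"
  then show "openin K (Some -` (S \<inter> T)) \<and> (None \<in> S \<inter> T \<longrightarrow> Some -` (S \<inter> T) \<in> \<U>)"
    using ultrafilter_on_Int[OF ultrafilter] by (simp add: openin_Int)
next
  fix \<K> :: "'a option set set"
  assume \<K>: "\<forall>S\<in>\<K>. openin K (Some -` S) \<and> (None \<in> S \<longrightarrow> Some -` S \<in> \<U>)"
  have "openin K (Some -` \<Union>\<K>)"
    unfolding vimage_Union using \<K> by auto
  moreover have "Some -` \<Union>\<K> \<in> \<U>" if None: "None \<in> \<Union>\<K>"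
  proof -
    obtain S where "S \<in> \<K>" "None \<in> S"
      using None by blast
    then have "Some -` S \<in> \<U>" "Some -` S \<subseteq> Some -` \<Union>\<K>"
      using \<K> by auto
    moreover have "Some -` \<Union>\<K> \<subseteq> topspace K"
      using openin_subset[OF \<open>openin K (Some -` \<Union>\<K>)\<close>] .
    ultimately show ?thesis
      by (rule ultrafilter_on_mono[OF ultrafilter])
  qed
  ultimately show "openin K (Some -` \<Union>\<K>) \<and> (None \<in> \<Union>\<K> \<longrightarrow> Some -` \<Union>\<K> \<in> \<U>)"
    by blast
qed

lemma openin_adjoin_limit_point:
  "openin (adjoin_limit_point K \<U>) S \<longleftrightarrow> openin K (Some -` S) \<and> (None \<in> S \<longrightarrow> Some -` S \<in> \<U>)"
  unfolding adjoin_limit_point_def using istopology_adjoin_limit_point by simp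

lemma topspace_adjoin_limit_point: "topspace (adjoin_limit_point K \<U>) = insert None (Some ` topspace K)"
proof -
  let ?T = "insert None (Some ` topspace K)"
  have "Some -` ?T = topspace K"
    by auto
  then have "openin (adjoin_limit_point K \<U>) ?T"
    using ultrafilter_on_space[OF ultrafilter] by (simp add: openin_adjoin_limit_point)
  moreover have "S \<subseteq> ?T" if "openin (adjoin_limit_point K \<U>) S" for S
  proof
    fix x assume "x \<in> S"
    show "x \<in> ?T"
    proof (cases x)
      case (Some a)
      then have "a \<in> Some -` S"
        using \<open>x \<in> S\<close> by simp
      then show ?thesis
        using that openin_subset Some by (force simp: openin_adjoin_limit_point)
    qed simp
  qed
  ultimately show ?thesis
    by (meson openin_subset openin_topspace subset_antisym)
qed

lemma openin_adjoin_limit_point_Collect: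
  "openin (adjoin_limit_point K \<U>) {x \<in> topspace (adjoin_limit_point K \<U>). P x} \<longleftrightarrow>
     openin K {a \<in> topspace K. P (Some a)} \<and> (P None \<longrightarrow> {a \<in> topspace K. P (Some a)} \<in> \<U>)"
proof -
  have "Some -` {x \<in> topspace (adjoin_limit_point K \<U>). P x} = {a \<in> topspace K. P (Some a)}"
    by (auto simp: topspace_adjoin_limit_point)
  then show ?thesis
    by (simp add: openin_adjoin_limit_point topspace_adjoin_limit_point)
qed

lemma continuous_map_Some_adjoin_limit_point: "continuous_map K (adjoin_limit_point K \<U>) Some"
  unfolding continuous_map_def
proof (intro conjI allI impI)
  show "Some \<in> topspace K \<rightarrow> topspace (adjoin_limit_point K \<U>)"
    by (auto simp: topspace_adjoin_limit_point)
  fix S assume S: "openin (adjoin_limit_point K \<U>) S"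
  then have "{a \<in> topspace K. Some a \<in> S} = Some -` S"
    using openin_subset[of K "Some -` S"] by (auto simp: openin_adjoin_limit_point)
  then show "openin K {a \<in> topspace K. Some a \<in> S}"
    using S by (simp add: openin_adjoin_limit_point)
qed

lemma llp_Some_antidiscr: "llp K (adjoin_limit_point K \<U>) Some antidiscr pt g"
  unfolding llp_pt_iff
proof (intro allI impI)
  fix i assume i: "continuous_map K antidiscr i"
  define h where "h x = (case x of None \<Rightarrow> Pa | Some a \<Rightarrow> i a)" for x
  have "continuous_map (adjoin_limit_point K \<U>) antidiscr h"
    using i by (auto simp: continuous_map_antidiscr topspace_adjoin_limit_point h_def)
  then show "\<exists>h. continuous_map (adjoin_limit_point K \<U>) antidiscr h \<and> (\<forall>a\<in>topspace K. h (Some a) = i a)"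
    by (intro exI[of _ h]) (simp add: h_def)
qed

lemma llp_Some_sierp: "llp K (adjoin_limit_point K \<U>) Some sierp pt g"
  unfolding llp_pt_iff
proof (intro allI impI)
  fix i assume i: "continuous_map K sierp i"
  let ?U = "{a \<in> topspace K. i a = Pa}"
  define h where "h x = (case x of None \<Rightarrow> if ?U \<in> \<U> then Pa else Pb | Some a \<Rightarrow> i a)" for x
  have "openin (adjoin_limit_point K \<U>) {x \<in> topspace (adjoin_limit_point K \<U>). h x = Pa}"
    using i by (simp add: openin_adjoin_limit_point_Collect continuous_map_sierp h_def)
  then have "continuous_map (adjoin_limit_point K \<U>) sierp h"
    using i by (auto simp: continuous_map_sierp topspace_adjoin_limit_point h_def)
  then show "\<exists>h. continuous_map (adjoin_limit_point K \<U>) sierp h \<and> (\<forall>a\<in>topspace K. h (Some a) = i a)"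
    by (intro exI[of _ h]) (simp add: h_def)
qed

lemma llp_Some_closedpt_sierp: "llp K (adjoin_limit_point K \<U>) Some closedpt sierp (\<lambda>x. x)"
  unfolding llp_def
proof (intro allI impI, elim conjE)
  fix i j
  assume i: "continuous_map K closedpt i" and j: "continuous_map (adjoin_limit_point K \<U>) sierp j"
    and commutes: "\<forall>a\<in>topspace K. i a = j (Some a)"
  have j_Some: "j (Some a) = Pb" if "a \<in> topspace K" for a
    using i commutes that by (simp add: continuous_map_closedpt)
  have "j None \<noteq> Pa"
  proof
    assume "j None = Pa"
    then have "{a \<in> topspace K. j (Some a) = Pa} \<in> \<U>"
      using j by (simp add: continuous_map_sierp openin_adjoin_limit_point_Collect)
    moreover have "{a \<in> topspace K. j (Some a) = Pa} = {}"
      using j_Some by auto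
    ultimately show False
      using ultrafilter_on_empty[OF ultrafilter] by simp
  qed
  then have "j None = Pb"
    using j by (auto simp: continuous_map_sierp topspace_adjoin_limit_point Pi_iff)
  then have "\<forall>x\<in>topspace (adjoin_limit_point K \<U>). Pb = j x"
    using j_Some by (auto simp: topspace_adjoin_limit_point)
  then show "\<exists>h. continuous_map (adjoin_limit_point K \<U>) closedpt h \<and> (\<forall>a\<in>topspace K. h (Some a) = i a)
      \<and> (\<forall>x\<in>topspace (adjoin_limit_point K \<U>). h x = j x)"
    using i by (intro exI[of _ "\<lambda>_. Pb"]) (auto simp: continuous_map_closedpt topspace_closedpt)
qed

lemma llp_Some_threept: "llp K (adjoin_limit_point K \<U>) Some threept pt g"
  unfolding llp_pt_iff
proof (intro allI impI)
  fix i assume i: "continuous_map K threept i"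
  let ?Ua = "{a \<in> topspace K. i a \<noteq> Pb}" and ?Ub = "{a \<in> topspace K. i a \<noteq> Pa}"
  define c where "c = (if ?Ua \<notin> \<U> then Pb else if ?Ub \<notin> \<U> then Pa else Po)"
  define h where "h x = (case x of None \<Rightarrow> c | Some a \<Rightarrow> i a)" for x
  have "?Ua \<union> ?Ub = topspace K"
    by auto
  then have "?Ua \<in> \<U> \<or> ?Ub \<in> \<U>"
    by (rule ultrafilter_on_Un[OF ultrafilter])
  then have "c \<in> {Pa, Po, Pb}" "c \<noteq> Pb \<longrightarrow> ?Ua \<in> \<U>" "c \<noteq> Pa \<longrightarrow> ?Ub \<in> \<U>"
    by (auto simp: c_def)
  moreover have "openin (adjoin_limit_point K \<U>) {x \<in> topspace (adjoin_limit_point K \<U>). h x \<noteq> Pb}"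
    "openin (adjoin_limit_point K \<U>) {x \<in> topspace (adjoin_limit_point K \<U>). h x \<noteq> Pa}"
    using i calculation by (simp_all add: openin_adjoin_limit_point_Collect continuous_map_threept h_def)
  ultimately have "continuous_map (adjoin_limit_point K \<U>) threept h"
    using i by (auto simp: continuous_map_threept topspace_adjoin_limit_point h_def simp del: Collect_mem_eq)
  then show "\<exists>h. continuous_map (adjoin_limit_point K \<U>) threept h \<and> (\<forall>a\<in>topspace K. h (Some a) = i a)"
    by (intro exI[of _ h]) (simp add: h_def)
qed

lemma in_CT_l_Some_adjoin_limit_point: "in_CT_l K (adjoin_limit_point K \<U>) Some"
  unfolding in_CT_l_def
  by (simp add: continuous_map_Some_adjoin_limit_point llp_Some_antidiscr llp_Some_sierp
      llp_Some_closedpt_sierp llp_Some_threept)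

end

lemma in_CT_l_imp_compact_extension:
  assumes "in_CT_l A B f" "compact_space K" "Hausdorff_space K" "continuous_map A K i"
  shows "compact_extension A B f K i"
proof
  have "continuous_map A B f" "llp A B f closedpt sierp (\<lambda>x. x)" "llp A B f threept pt (\<lambda>_. ())"
    using assms(1) unfolding in_CT_l_def by simp_all
  then show "continuous_map A B f"
    and "\<And>V b. openin B V \<Longrightarrow> b \<in> V \<Longrightarrow> topspace A \<inter> f -` V \<noteq> {}"
    and "\<And>F1 F2 b. closedin A F1 \<Longrightarrow> closedin A F2 \<Longrightarrow> disjnt F1 F2 \<Longrightarrow> b \<in> topspace B \<Longrightarrow>
      \<exists>V. openin B V \<and> b \<in> V \<and> (disjnt F1 (f -` V) \<or> disjnt F2 (f -` V))"
    by (simp_all add: llp_closedpt_sierp_imp_dense llp_threept_imp_separating)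
qed (use assms in simp_all)

lemma compact_Hausdorff_imp_in_CT_lr:
  assumes "compact_space K" "Hausdorff_space K"
  shows "in_CT_lr TYPE('a) TYPE('b) K pt (\<lambda>_. ())"
  unfolding in_CT_lr_def llp_pt_iff
proof (intro conjI allI impI)
  fix A :: "'a topology" and B :: "'b topology" and f i
  assume "in_CT_l A B f" "continuous_map A K i"
  then interpret compact_extension A B f K i
    using assms by (intro in_CT_l_imp_compact_extension)
  show "\<exists>h. continuous_map B K h \<and> (\<forall>a\<in>topspace A. h (f a) = i a)"
    using continuous_map_extension extension_extends by blast
qed (rule continuous_map_pt)

lemma in_CT_lr_imp_compact_space:
  fixes K :: "'k topology"
  assumes "in_CT_lr TYPE('k) TYPE('k option) K pt (\<lambda>_. ())"
  shows "compact_space K"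
proof (rule ccontr)
  assume "\<not> compact_space K"
  obtain \<U> where \<U>: "ultrafilter_on (topspace K) \<U>"
    and nowhere_convergent: "\<And>k. k \<in> topspace K \<Longrightarrow> \<exists>V. openin K V \<and> k \<in> V \<and> V \<notin> \<U>"
    using \<open>\<not> compact_space K\<close> by (rule not_compact_space_imp_ultrafilter_on) (rule that)
  let ?B = "adjoin_limit_point K \<U>"
  have "llp K ?B Some K pt (\<lambda>_. ())"
    using assms in_CT_l_Some_adjoin_limit_point[OF \<U>] unfolding in_CT_lr_def by blast
  then obtain r where r: "continuous_map ?B K r" "\<forall>a\<in>topspace K. r (Some a) = a"
    using continuous_map_id[of K] unfolding llp_pt_iff id_def by blast
  have "r None \<in> topspace K"
    using continuous_map_funspace[OF r(1)] by (auto simp: topspace_adjoin_limit_point[OF \<U>])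
  then obtain V where V: "openin K V" "r None \<in> V" "V \<notin> \<U>"
    using nowhere_convergent by blast
  have "openin ?B {x \<in> topspace ?B. r x \<in> V}"
    using openin_continuous_map_preimage[OF r(1) V(1)] .
  then have "{a \<in> topspace K. r (Some a) \<in> V} \<in> \<U>"
    using V(2) by (simp add: openin_adjoin_limit_point_Collect[OF \<U>])
  moreover have "{a \<in> topspace K. r (Some a) \<in> V} = V"
    using r(2) openin_subset[OF V(1)] by auto
  ultimately show False
    using V(3) by simp
qed

theorem claim1:
  fixes K :: "'k topology"
  assumes "Hausdorff_space K"
  shows "(compact_space K \<longrightarrow> in_CT_lr TYPE('a) TYPE('b) K pt (\<lambda>_. ()))
       \<and> (in_CT_lr TYPE('k) TYPE('k option) K pt (\<lambda>_. ()) \<longrightarrow> compact_space K)"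
  using compact_Hausdorff_imp_in_CT_lr[OF _ assms] in_CT_lr_imp_compact_space by blast

end
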